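(* Let $\Phi$ be the set of formulas of $NOM$, preordered by $\phi\le\psi$ iff $\phi\vdash\psi$ is derivable in $NOM$, let $\mathcal L$ be the partially ordered quotient obtained by identifying $\phi$ and $\psi$ when $\phi\le\psi$ and $\psi\le\phi$, with quotient map $[\,\cdot\,]:\Phi\to\mathcal L$, and let $\neg[\phi]=[\neg\phi]$ (this is a well-defined order-reversing involution). Then $(\mathcal L,\le,\neg)$ is an orthomodular lattice, and for all formulas $\phi,\psi$: $[\phi\wedge\psi]=[\phi]\wedge[\psi]$, $[\phi\rightarrow\psi]=[\phi]\rightarrow[\psi]$ (Sasaki arrow), and $[\neg\phi]=\neg[\phi]$.
   Context: The propositional deductive system $NOM$: formulas are built from propositional letters using $\wedge$, $\rightarrow$, $\neg$. Sequents are $\phi_1,\ldots,\phi_n\vdash\psi$ ($n\ge0$) with antecedent a finite ordered sequence. With $\Gamma$ a finite possibly empty sequence of formulas and $\phi,\psi,\chi$ formulas, the rules of $NOM$ are: (assumption) $\Gamma,\phi\vdash\phi$; (cut) $\Gamma\vdash\phi$, $\Gamma,\phi\vdash\psi$ $\Rightarrow$ $\Gamma\vdash\psi$; (paste) $\Gamma\vdash\phi$, $\Gamma\vdash\psi$ $\Rightarrow$ $\Gamma,\phi\vdash\psi$; (compatible exchange) $\Gamma,\phi,\psi\vdash\phi$, $\Gamma,\phi,\psi\vdash\chi$, $\Gamma,\psi,\phi\vdash\psi$ $\Rightarrow$ $\Gamma,\psi,\phi\vdash\chi$; ($\wedge$-intro) $\Gamma\vdash\phi$, $\Gamma\vdash\psi$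 $\Rightarrow$ $\Gamma\vdash\phi\wedge\psi$; ($\wedge$-elim) $\Gamma\vdash\phi\wedge\psi$ $\Rightarrow$ $\Gamma\vdash\phi$ and $\Rightarrow$ $\Gamma\vdash\psi$; ($\rightarrow$-intro) $\Gamma,\phi\vdash\psi$ $\Rightarrow$ $\Gamma\vdash\phi\rightarrow\psi$; ($\rightarrow$-elim) $\Gamma\vdash\phi\rightarrow\psi$ $\Rightarrow$ $\Gamma,\phi\vdash\psi$; (excluded middle) $\Gamma,\phi\vdash\psi$, $\Gamma,\neg\phi\vdash\psi$ $\Rightarrow$ $\Gamma\vdash\psi$; (explosion) $\Gamma\vdash\neg\phi$ $\Rightarrow$ $\Gamma,\phi\vdash\psi$. An orthomodular lattice is a bounded lattice with an order-reversing involution $\neg$ satisfying $a\wedge\neg a=\bot$, $a\vee\neg a=\top$, and $a\le b\Rightarrow a\vee(\neg a\wedge b)=b$; in it $a\rightarrow b=\neg a\vee(a\wedge b)$. *)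

theory Defs
  imports Main
begin

datatype 'a form = Letter 'a | And "'a form" "'a form" | Imp "'a form" "'a form" | Neg "'a form"

text \<open>Derivable sequents; the antecedent is a list, and "Gamma, phi" is Gamma @ [phi].\<close>
inductive nom :: "'a form list \<Rightarrow> 'a form \<Rightarrow> bool" where
  assumption: "nom (\<Gamma> @ [\<phi>]) \<phi>"
| cut: "nom \<Gamma> \<phi> \<Longrightarrow> nom (\<Gamma> @ [\<phi>]) \<psi> \<Longrightarrow> nom \<Gamma> \<psi>"
| paste: "nom \<Gamma> \<phi> \<Longrightarrow> nom \<Gamma> \<psi> \<Longrightarrow> nom (\<Gamma> @ [\<phi>]) \<psi>"
| compat_exch: "nom (\<Gamma> @ [\<phi>, \<psi>]) \<phi> \<Longrightarrow> nom (\<Gamma> @ [\<phi>, \<psi>]) \<chi> \<Longrightarrow>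
      nom (\<Gamma> @ [\<psi>, \<phi>]) \<psi> \<Longrightarrow> nom (\<Gamma> @ [\<psi>, \<phi>]) \<chi>"
| and_intro: "nom \<Gamma> \<phi> \<Longrightarrow> nom \<Gamma> \<psi> \<Longrightarrow> nom \<Gamma> (And \<phi> \<psi>)"
| and_elim1: "nom \<Gamma> (And \<phi> \<psi>) \<Longrightarrow> nom \<Gamma> \<phi>"
| and_elim2: "nom \<Gamma> (And \<phi> \<psi>) \<Longrightarrow> nom \<Gamma> \<psi>"
| imp_intro: "nom (\<Gamma> @ [\<phi>]) \<psi> \<Longrightarrow> nom \<Gamma> (Imp \<phi> \<psi>)"
| imp_elim: "nom \<Gamma> (Imp \<phi> \<psi>) \<Longrightarrow> nom (\<Gamma> @ [\<phi>]) \<psi>"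
| excluded_middle: "nom (\<Gamma> @ [\<phi>]) \<psi> \<Longrightarrow> nom (\<Gamma> @ [Neg \<phi>]) \<psi> \<Longrightarrow> nom \<Gamma> \<psi>"
| explosion: "nom \<Gamma> (Neg \<phi>) \<Longrightarrow> nom (\<Gamma> @ [\<phi>]) \<psi>"

definition fle :: "'a form \<Rightarrow> 'a form \<Rightarrow> bool" where
  "fle \<phi> \<psi> \<longleftrightarrow> nom [\<phi>] \<psi>"

definition cls :: "'a form \<Rightarrow> 'a form set" where
  "cls \<phi> = {\<psi>. fle \<phi> \<psi> \<and> fle \<psi> \<phi>}"

definition Lcarrier :: "'a form set set" where
  "Lcarrier = range cls"

definition Lle :: "'a form set \<Rightarrow> 'a form set \<Rightarrow> bool" where
  "Lle A B \<longleftrightarrow> (\<exists>\<phi> \<psi>. A = cls \<phi> \<and> B = cls \<psi> \<and> fle \<phi> \<psi>)"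

definition Lneg :: "'a form set \<Rightarrow> 'a form set" where
  "Lneg A = cls (Neg (SOME \<phi>. A = cls \<phi>))"

definition partial_order_on' :: "'b set \<Rightarrow> ('b \<Rightarrow> 'b \<Rightarrow> bool) \<Rightarrow> bool" where
  "partial_order_on' S le \<longleftrightarrow>
     (\<forall>a\<in>S. le a a) \<and>
     (\<forall>a\<in>S. \<forall>b\<in>S. le a b \<and> le b a \<longrightarrow> a = b) \<and>
     (\<forall>a\<in>S. \<forall>b\<in>S. \<forall>c\<in>S. le a b \<and> le b c \<longrightarrow> le a c)"

definition is_meet :: "'b set \<Rightarrow> ('b \<Rightarrow> 'b \<Rightarrow> bool) \<Rightarrow> 'b \<Rightarrow> 'b \<Rightarrow> 'b \<Rightarrow> bool" where
  "is_meet S le a b m \<longleftrightarrow> m \<in> S \<and> le m a \<and> le m b \<and> (\<forall>x\<in>S. le x a \<and> le x b \<longrightarrow> le x m)"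

definition is_join :: "'b set \<Rightarrow> ('b \<Rightarrow> 'b \<Rightarrow> bool) \<Rightarrow> 'b \<Rightarrow> 'b \<Rightarrow> 'b \<Rightarrow> bool" where
  "is_join S le a b j \<longleftrightarrow> j \<in> S \<and> le a j \<and> le b j \<and> (\<forall>x\<in>S. le a x \<and> le b x \<longrightarrow> le j x)"

definition meet_in :: "'b set \<Rightarrow> ('b \<Rightarrow> 'b \<Rightarrow> bool) \<Rightarrow> 'b \<Rightarrow> 'b \<Rightarrow> 'b" where
  "meet_in S le a b = (THE m. is_meet S le a b m)"

definition join_in :: "'b set \<Rightarrow> ('b \<Rightarrow> 'b \<Rightarrow> bool) \<Rightarrow> 'b \<Rightarrow> 'b \<Rightarrow> 'b" where
  "join_in S le a b = (THE j. is_join S le a b j)"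

definition is_bot :: "'b set \<Rightarrow> ('b \<Rightarrow> 'b \<Rightarrow> bool) \<Rightarrow> 'b \<Rightarrow> bool" where
  "is_bot S le z \<longleftrightarrow> z \<in> S \<and> (\<forall>x\<in>S. le z x)"

definition is_top :: "'b set \<Rightarrow> ('b \<Rightarrow> 'b \<Rightarrow> bool) \<Rightarrow> 'b \<Rightarrow> bool" where
  "is_top S le t \<longleftrightarrow> t \<in> S \<and> (\<forall>x\<in>S. le x t)"

definition orthomodular_lattice_on ::
    "'b set \<Rightarrow> ('b \<Rightarrow> 'b \<Rightarrow> bool) \<Rightarrow> ('b \<Rightarrow> 'b) \<Rightarrow> bool" where
  "orthomodular_lattice_on S le neg \<longleftrightarrow>
     partial_order_on' S le \<and>
     (\<forall>a\<in>S. \<forall>b\<in>S. \<exists>m. is_meet S le a b m) \<and>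
     (\<forall>a\<in>S. \<forall>b\<in>S. \<exists>j. is_join S le a b j) \<and>
     (\<exists>z. is_bot S le z) \<and> (\<exists>t. is_top S le t) \<and>
     (\<forall>a\<in>S. neg a \<in> S) \<and>
     (\<forall>a\<in>S. neg (neg a) = a) \<and>
     (\<forall>a\<in>S. \<forall>b\<in>S. le a b \<longrightarrow> le (neg b) (neg a)) \<and>
     (\<forall>a\<in>S. is_bot S le (meet_in S le a (neg a))) \<and>
     (\<forall>a\<in>S. is_top S le (join_in S le a (neg a))) \<and>
     (\<forall>a\<in>S. \<forall>b\<in>S. le a b \<longrightarrow> join_in S le a (meet_in S le (neg a) b) = b)"

definition sasaki_in :: "'b set \<Rightarrow> ('b \<Rightarrow> 'b \<Rightarrow> bool) \<Rightarrow> ('b \<Rightarrow> 'b) \<Rightarrow> 'b \<Rightarrow> 'b \<Rightarrow> 'b" where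
  "sasaki_in S le neg a b = join_in S le (neg a) (meet_in S le a b)"

end

theory Submission
  imports Defs
begin

text \<open>The one non-structural tool is compatible exchange, in the form: if \<open>p \<turnstile> q\<close>, then the
  contexts \<open>\<Gamma>, q, p\<close> and \<open>\<Gamma>, p\<close> derive the same formulas. It yields contraposition in
  context and the persistence of a refutation \<open>\<Gamma> \<turnstile> \<not>a\<close> when a consequence of \<open>a\<close> is
  added to \<open>\<Gamma>\<close>; these two rules give double negation, the orthomodular law and the
  Sasaki form \<open>\<not>(\<not>\<not>p \<and> \<not>(p \<and> q))\<close> of \<open>p \<rightarrow> q\<close>. In the quotient, \<open>\<and>\<close> is the meet and
  \<open>\<not>(\<not>\<phi> \<and> \<not>\<psi>)\<close> the join.\<close>

lemma nom_weaken: "nom \<Gamma> \<psi> \<Longrightarrow> nom (\<Delta> @ \<Gamma>) \<psi>"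
  by (induction rule: nom.induct) (auto intro: nom.intros[where \<Gamma> = "\<Delta> @ _", simplified])

lemma nom_refl: "nom [\<phi>] \<phi>"
  using nom.assumption[of "[]"] by simp

lemma nom_trans: "nom \<Gamma> \<phi> \<Longrightarrow> nom [\<phi>] \<psi> \<Longrightarrow> nom \<Gamma> \<psi>"
  using nom.cut nom_weaken by blast

lemma nom_contradiction: "nom \<Gamma> \<phi> \<Longrightarrow> nom \<Gamma> (Neg \<phi>) \<Longrightarrow> nom \<Gamma> \<chi>"
  using nom.cut nom.explosion by blast

lemma nom_entailed_exchange:
  assumes "nom [p] q"
  shows "nom (\<Gamma> @ [q, p]) \<chi> \<longleftrightarrow> nom (\<Gamma> @ [p]) \<chi>"
proof -
  have pq: "nom (\<Gamma> @ [p]) q" and qpq: "nom (\<Gamma> @ [q, p]) q"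
    using nom_weaken[OF assms, of \<Gamma>] nom_weaken[OF assms, of "\<Gamma> @ [q]"] by simp_all
  have pqp: "nom (\<Gamma> @ [p, q]) p"
    using nom.paste[OF pq nom.assumption[of \<Gamma> p]] by simp
  show ?thesis
  proof
    assume "nom (\<Gamma> @ [q, p]) \<chi>"
    from qpq this pqp have "nom (\<Gamma> @ [p, q]) \<chi>" by (rule nom.compat_exch)
    then show "nom (\<Gamma> @ [p]) \<chi>" using nom.cut[OF pq] by simp
  next
    assume "nom (\<Gamma> @ [p]) \<chi>"
    then have "nom (\<Gamma> @ [p, q]) \<chi>" using nom.paste[OF pq] by simp
    from pqp this qpq show "nom (\<Gamma> @ [q, p]) \<chi>" by (rule nom.compat_exch)
  qed
qed

lemma nom_reductio: "nom (\<Gamma> @ [\<phi>]) (Neg \<phi>) \<Longrightarrow> nom \<Gamma> (Neg \<phi>)"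
  by (rule nom.excluded_middle[OF _ nom.assumption])

lemma nom_And_left: "nom [And p q] p"
  by (rule nom.and_elim1[OF nom_refl])

lemma nom_And_right: "nom [And p q] q"
  by (rule nom.and_elim2[OF nom_refl])

lemma nom_Neg_Imp: "nom [Neg p] (Imp p q)"
  by (rule nom.imp_intro[OF nom.explosion[OF nom_refl]])

lemma nom_And_Imp: "nom [And p q] (Imp p q)"
  by (rule nom.imp_intro[OF nom.paste[OF nom_And_left nom_And_right]])

lemma nom_neg_intro:
  assumes "nom \<Gamma> (Neg q)" and "nom [p] q"
  shows "nom \<Gamma> (Neg p)"
proof (rule nom_reductio)
  have "nom (\<Gamma> @ [q, p]) (Neg p)"
    using nom.paste[OF nom.explosion nom.explosion, OF assms(1) assms(1)] by simp
  then show "nom (\<Gamma> @ [p]) (Neg p)" using nom_entailed_exchange[OF assms(2)] by blast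
qed

lemma nom_neg_persist:
  assumes "nom \<Gamma> (Neg a)" and "nom [a] b"
  shows "nom (\<Gamma> @ [b]) (Neg a)"
proof -
  have "nom (\<Gamma> @ [b, a]) (Neg a)"
    using nom_entailed_exchange[OF assms(2)] nom.explosion[OF assms(1)] by simp
  then show ?thesis using nom_reductio[of "\<Gamma> @ [b]"] by simp
qed

lemma nom_neg_neg_elim: "nom \<Gamma> (Neg (Neg p)) \<Longrightarrow> nom \<Gamma> p"
  by (rule nom.excluded_middle[OF nom.assumption nom.explosion])

lemma nom_neg_neg_intro: "nom [p] (Neg (Neg p))"
proof -
  have "nom [Neg p] (Imp p (Neg (Neg p)))"
    by (rule nom_Neg_Imp)
  moreover have "nom [Neg (Neg p)] (Imp p (Neg (Neg p)))"
    by (rule nom.imp_intro[OF nom.paste[OF nom_neg_neg_elim[OF nom_refl] nom_refl]])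
  ultimately have "nom [] (Imp p (Neg (Neg p)))"
    using nom.excluded_middle[of "[]"] by simp
  then show ?thesis using nom.imp_elim[of "[]"] by simp
qed

abbreviation Or :: "'a form \<Rightarrow> 'a form \<Rightarrow> 'a form" where
  "Or \<phi> \<psi> \<equiv> Neg (And (Neg \<phi>) (Neg \<psi>))"

lemma nom_orthomodular:
  assumes "nom [a] b"
  shows "nom [And (Neg a) (Neg (And (Neg a) b))] (Neg b)" (is "nom [?X] _")
proof -
  have "nom [?X, b] (Neg a)"
    using nom_neg_persist[OF nom_And_left assms] by simp
  then have "nom [?X, b] (And (Neg a) b)"
    using nom.and_intro nom.assumption[of "[?X]" b] by simp
  moreover have "nom [?X, b] (Neg (And (Neg a) b))"
    using nom_neg_persist[OF nom_And_right nom_And_right] by simp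
  ultimately have "nom [?X, b] (Neg b)" by (rule nom_contradiction)
  then show ?thesis using nom_reductio[of "[?X]"] by simp
qed

lemma nom_refutes_Imp: "nom [And (Neg (Neg p)) (Neg (And p q))] (Neg (Imp p q))"
  (is "nom [?Y] _")
proof -
  have "nom [?Y, Imp p q] (Neg (Neg p))"
    using nom_neg_persist[OF nom_And_left nom_Neg_Imp] by simp
  then have "nom [?Y, Imp p q] p" by (rule nom_neg_neg_elim)
  moreover have "nom [?Y, Imp p q, p] q"
    using nom.imp_elim[OF nom.assumption[of "[?Y]"]] by simp
  ultimately have "nom [?Y, Imp p q] (And p q)"
    using nom.and_intro nom.cut[of "[?Y, Imp p q]" p q] by simp
  moreover have "nom [?Y, Imp p q] (Neg (And p q))"
    using nom_neg_persist[OF nom_And_right nom_And_Imp] by simp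
  ultimately have "nom [?Y, Imp p q] (Neg (Imp p q))" by (rule nom_contradiction)
  then show ?thesis using nom_reductio[of "[?Y]"] by simp
qed

lemma nom_Imp_of_Sasaki: "nom [Or (Neg p) (And p q)] (Imp p q)" (is "nom [?Z] _")
proof -
  let ?\<Gamma> = "[?Z, Neg (Imp p q)]"
  have "nom ?\<Gamma> (Neg (Neg p))" and "nom ?\<Gamma> (Neg (And p q))"
    using nom_neg_intro[OF nom.assumption[of "[?Z]"] nom_Neg_Imp]
      nom_neg_intro[OF nom.assumption[of "[?Z]"] nom_And_Imp] by simp_all
  then have "nom ?\<Gamma> (And (Neg (Neg p)) (Neg (And p q)))" by (rule nom.and_intro)
  moreover have "nom ?\<Gamma> (Or (Neg p) (And p q))"
    using nom_neg_persist[OF nom_refl nom_refutes_Imp] by simp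
  ultimately have "nom ?\<Gamma> (Imp p q)" by (rule nom_contradiction)
  then show ?thesis
    using nom.excluded_middle[of "[?Z]" "Imp p q"] nom.assumption[of "[?Z]" "Imp p q"] by simp
qed

lemma fle_refl: "fle \<phi> \<phi>"
  unfolding fle_def by (rule nom_refl)

lemma fle_trans: "fle \<phi> \<psi> \<Longrightarrow> fle \<psi> \<chi> \<Longrightarrow> fle \<phi> \<chi>"
  unfolding fle_def by (rule nom_trans)

lemma fle_Neg_antimono: "fle \<phi> \<psi> \<Longrightarrow> fle (Neg \<psi>) (Neg \<phi>)"
  unfolding fle_def by (rule nom_neg_intro[OF nom_refl])

lemma fle_Neg_Neg_left: "fle (Neg (Neg \<phi>)) \<phi>"
  unfolding fle_def by (rule nom_neg_neg_elim[OF nom_refl])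

lemma fle_Neg_Neg_right: "fle \<phi> (Neg (Neg \<phi>))"
  unfolding fle_def by (rule nom_neg_neg_intro)

lemma fle_Neg_left_swap: "fle (Neg \<phi>) \<psi> \<Longrightarrow> fle (Neg \<psi>) \<phi>"
  using fle_trans[OF fle_Neg_antimono fle_Neg_Neg_left] by blast

lemma fle_Neg_right_swap: "fle \<phi> (Neg \<psi>) \<Longrightarrow> fle \<psi> (Neg \<phi>)"
  using fle_trans[OF fle_Neg_Neg_right fle_Neg_antimono] by blast

lemma fle_And_left: "fle (And \<phi> \<psi>) \<phi>"
  unfolding fle_def by (rule nom_And_left)

lemma fle_And_right: "fle (And \<phi> \<psi>) \<psi>"
  unfolding fle_def by (rule nom_And_right)

lemma fle_AndI: "fle \<chi> \<phi> \<Longrightarrow> fle \<chi> \<psi> \<Longrightarrow> fle \<chi> (And \<phi> \<psi>)"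
  unfolding fle_def by (rule nom.and_intro)

lemma fle_Or_left: "fle \<phi> (Or \<phi> \<psi>)"
  by (rule fle_Neg_right_swap[OF fle_And_left])

lemma fle_Or_right: "fle \<psi> (Or \<phi> \<psi>)"
  by (rule fle_Neg_right_swap[OF fle_And_right])

lemma fle_OrI: "fle \<phi> \<chi> \<Longrightarrow> fle \<psi> \<chi> \<Longrightarrow> fle (Or \<phi> \<psi>) \<chi>"
  by (rule fle_Neg_left_swap[OF fle_AndI[OF fle_Neg_antimono fle_Neg_antimono]])

lemma fle_And_Neg: "fle (And \<phi> (Neg \<phi>)) \<psi>"
  unfolding fle_def by (rule nom_contradiction[OF nom_And_left nom_And_right])

lemma fle_Or_Neg: "fle \<psi> (Or \<phi> (Neg \<phi>))"
  by (rule fle_Neg_right_swap[OF fle_And_Neg])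

lemma fle_orthomodular: "fle \<phi> \<psi> \<Longrightarrow> fle \<psi> (Or \<phi> (And (Neg \<phi>) \<psi>))"
  unfolding fle_def by (rule fle_Neg_right_swap[unfolded fle_def, OF nom_orthomodular])

lemma fle_Imp_Sasaki: "fle (Imp \<phi> \<psi>) (Or (Neg \<phi>) (And \<phi> \<psi>))"
  unfolding fle_def by (rule fle_Neg_right_swap[unfolded fle_def, OF nom_refutes_Imp])

lemma fle_Sasaki_Imp: "fle (Or (Neg \<phi>) (And \<phi> \<psi>)) (Imp \<phi> \<psi>)"
  unfolding fle_def by (rule nom_Imp_of_Sasaki)

lemma meet_in_eqI:
  assumes "\<And>x y. x \<in> S \<Longrightarrow> y \<in> S \<Longrightarrow> le x y \<Longrightarrow> le y x \<Longrightarrow> x = y"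
    and "is_meet S le a b m"
  shows "meet_in S le a b = m"
  unfolding meet_in_def
  by (rule the_equality) (use assms in \<open>auto simp: is_meet_def\<close>)

lemma join_in_eqI:
  assumes "\<And>x y. x \<in> S \<Longrightarrow> y \<in> S \<Longrightarrow> le x y \<Longrightarrow> le y x \<Longrightarrow> x = y"
    and "is_join S le a b j"
  shows "join_in S le a b = j"
  unfolding join_in_def
  by (rule the_equality) (use assms in \<open>auto simp: is_join_def\<close>)

lemma cls_eq_iff: "cls \<phi> = cls \<psi> \<longleftrightarrow> fle \<phi> \<psi> \<and> fle \<psi> \<phi>"
proof
  assume "cls \<phi> = cls \<psi>"
  moreover have "\<phi> \<in> cls \<phi>" unfolding cls_def by (simp add: fle_refl)
  ultimately show "fle \<phi> \<psi> \<and> fle \<psi> \<phi>" unfolding cls_def by simp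
qed (auto simp: cls_def intro: fle_trans)

lemma Lle_cls: "Lle (cls \<phi>) (cls \<psi>) \<longleftrightarrow> fle \<phi> \<psi>"
  unfolding Lle_def cls_eq_iff by (blast intro: fle_refl fle_trans)

lemma Lneg_cls: "Lneg (cls \<phi>) = cls (Neg \<phi>)"
proof -
  have "cls \<phi> = cls (SOME \<chi>. cls \<phi> = cls \<chi>)" by (rule someI) (rule refl)
  then show ?thesis unfolding Lneg_def by (simp add: cls_eq_iff fle_Neg_antimono)
qed

lemma cls_in_Lcarrier: "cls \<phi> \<in> Lcarrier"
  unfolding Lcarrier_def by simp

lemma ball_Lcarrier: "(\<forall>x\<in>Lcarrier. P x) \<longleftrightarrow> (\<forall>\<phi>. P (cls \<phi>))"
  unfolding Lcarrier_def by simp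

lemma Lle_antisym: "x \<in> Lcarrier \<Longrightarrow> y \<in> Lcarrier \<Longrightarrow> Lle x y \<Longrightarrow> Lle y x \<Longrightarrow> x = y"
  unfolding Lcarrier_def by (elim rangeE) (simp add: Lle_cls cls_eq_iff)

lemma is_meet_cls: "is_meet Lcarrier Lle (cls \<phi>) (cls \<psi>) (cls (And \<phi> \<psi>))"
  unfolding is_meet_def ball_Lcarrier
  by (simp add: cls_in_Lcarrier Lle_cls fle_And_left fle_And_right fle_AndI)

lemma is_join_cls: "is_join Lcarrier Lle (cls \<phi>) (cls \<psi>) (cls (Or \<phi> \<psi>))"
  unfolding is_join_def ball_Lcarrier
  by (simp add: cls_in_Lcarrier Lle_cls fle_Or_left fle_Or_right fle_OrI)

lemma meet_in_cls: "meet_in Lcarrier Lle (cls \<phi>) (cls \<psi>) = cls (And \<phi> \<psi>)"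
  by (rule meet_in_eqI[OF Lle_antisym is_meet_cls])

lemma join_in_cls: "join_in Lcarrier Lle (cls \<phi>) (cls \<psi>) = cls (Or \<phi> \<psi>)"
  by (rule join_in_eqI[OF Lle_antisym is_join_cls])

lemma sasaki_in_cls: "sasaki_in Lcarrier Lle Lneg (cls \<phi>) (cls \<psi>) = cls (Imp \<phi> \<psi>)"
  unfolding sasaki_in_def Lneg_cls meet_in_cls join_in_cls
  by (simp add: cls_eq_iff fle_Imp_Sasaki fle_Sasaki_Imp)

lemma Lcarrier_orthomodular: "orthomodular_lattice_on Lcarrier Lle Lneg"
proof -
  have "is_bot Lcarrier Lle (cls (And \<phi> (Neg \<phi>)))" for \<phi> :: "'a form"
    unfolding is_bot_def ball_Lcarrier by (simp add: cls_in_Lcarrier Lle_cls fle_And_Neg)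
  moreover have "is_top Lcarrier Lle (cls (Or \<phi> (Neg \<phi>)))" for \<phi> :: "'a form"
    unfolding is_top_def ball_Lcarrier by (simp add: cls_in_Lcarrier Lle_cls fle_Or_Neg)
  moreover have "cls (Or \<phi> (And (Neg \<phi>) \<psi>)) = cls \<psi>" if "fle \<phi> \<psi>" for \<phi> \<psi> :: "'a form"
    using that by (simp add: cls_eq_iff fle_orthomodular fle_OrI fle_And_right)
  moreover have "\<exists>m. is_meet Lcarrier Lle (cls \<phi>) (cls \<psi>) m" for \<phi> \<psi> :: "'a form"
    using is_meet_cls by blast
  moreover have "\<exists>j. is_join Lcarrier Lle (cls \<phi>) (cls \<psi>) j" for \<phi> \<psi> :: "'a form"
    using is_join_cls by blast
  ultimately show ?thesis
    unfolding orthomodular_lattice_on_def partial_order_on'_def ball_Lcarrier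
    by (auto simp: Lle_cls Lneg_cls meet_in_cls join_in_cls cls_in_Lcarrier cls_eq_iff
        fle_refl fle_Neg_antimono fle_Neg_Neg_left fle_Neg_Neg_right intro: fle_trans)
qed

theorem theorem3p8:
  shows "orthomodular_lattice_on (Lcarrier :: 'a form set set) Lle Lneg \<and>
    (\<forall>\<phi> \<psi> :: 'a form.
       cls (And \<phi> \<psi>) = meet_in Lcarrier Lle (cls \<phi>) (cls \<psi>) \<and>
       cls (Imp \<phi> \<psi>) = sasaki_in Lcarrier Lle Lneg (cls \<phi>) (cls \<psi>) \<and>
       cls (Neg \<phi>) = Lneg (cls \<phi>))"
  by (simp add: Lcarrier_orthomodular meet_in_cls sasaki_in_cls Lneg_cls)

end
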